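(* For each $s\in\{2,3,4\}$ we have $L_s(r)>0$ for all real $r\in(2,\infty)$. Furthermore, for $s\in\{3,4\}$ we also have $L_s(2)>0$.
   Context: For an integer $s\ge2$ and real $r\ge2$ (with $rs-r-s>0$), define \[ L_s(r)=L(r,s)=\frac rs\log(s-1)+(r-1)\log(r-1)-\frac{rs-r-s}{s}\log r-\frac{rs-r-s}{s(s-1)}\log(rs-r-s). \] *)

theory Defs
  imports Complex_Main
begin

definition L :: "real \<Rightarrow> nat \<Rightarrow> real" where
  "L r s = r / real s * ln (real s - 1) + (r - 1) * ln (r - 1)
     - (r * real s - r - real s) / real s * ln r
     - (r * real s - r - real s) / (real s * (real s - 1)) * ln (r * real s - r - real s)"

end

theory Submission
  imports Defs
begin

text \<open>
  For \<open>s = 2\<close> the positivity of \<open>L r 2 = (r-1) ln(r-1) - (r-2)/2 \<cdot> ln(r(r-2))\<close> is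
  the inequality \<open>r(r-2) < (r-1)\<^sup>2\<close>. For \<open>s = 3, 4\<close> the values at \<open>r = 2\<close> are positive
  (\<open>L 2 4 > 0\<close> amounts to \<open>16 < 27\<close>), and \<open>L\<close> is increasing in \<open>r \<ge> 2\<close>: bounding \<open>ln m\<close>,
  \<open>m = rs - r - s\<close>, by \<open>ln x \<le> x - 1\<close> at \<open>x = m/(m+1)\<close>, and \<open>ln r - ln(r-1)\<close> by
  \<open>ln y \<le> (y - 1/y)/2\<close> at \<open>y = r/(r-1)\<close>, reduces the positivity of \<open>\<partial>L/\<partial>r\<close> to
  \<open>s\<^sup>2 - 1 < 2rs\<close>, which holds for \<open>s \<le> 4 \<le> 2r\<close>.
\<close>

lemma ln_le_half_diff_inverse:
  fixes y :: real
  assumes "1 \<le> y"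
  shows "ln y \<le> (y - 1 / y) / 2"
proof -
  define f where "f y = (y - 1 / y) / 2 - ln y" for y :: real
  have "f 1 \<le> f y"
  proof (rule DERIV_nonneg_imp_nondecreasing[OF assms])
    fix x :: real assume "1 \<le> x" "x \<le> y"
    then have "(f has_real_derivative (x - 1)\<^sup>2 / (2 * x\<^sup>2)) (at x)"
      unfolding f_def
      by (auto intro!: derivative_eq_intros simp: field_simps power2_eq_square)
    then show "\<exists>d. (f has_real_derivative d) (at x) \<and> 0 \<le> d"
      by auto
  qed
  then show ?thesis by (simp add: f_def)
qed

definition scaled_L_deriv :: "real \<Rightarrow> real \<Rightarrow> real" where
  "scaled_L_deriv r s = ln (s - 1) + s * ln (r - 1) + s - 1 - (s - 1) * ln r
     - (r * s - r - s) / r - ln (r * s - r - s)"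

lemma L_has_real_derivative:
  fixes s :: nat
  assumes "2 \<le> s" and m_pos: "x * real s - x - real s > 0"
  shows "((\<lambda>r. L r s) has_real_derivative scaled_L_deriv x (real s) / real s) (at x)"
proof -
  have "real s > 1"
    using assms(1) by simp
  moreover from m_pos have "(x - 1) * (real s - 1) > 1"
    by (simp add: algebra_simps)
  ultimately have "x - 1 > 0"
    by (smt (verit) zero_less_mult_iff)
  with \<open>real s > 1\<close> m_pos show ?thesis
    unfolding L_def scaled_L_deriv_def
    by (auto intro!: derivative_eq_intros) (simp add: field_simps)
qed

lemma scaled_L_deriv_pos:
  fixes r s :: real
  assumes s: "2 < s" "s \<le> 4" and r: "2 \<le> r"
  shows "scaled_L_deriv r s > 0"
proof -
  define m where "m = r * s - r - s"
  have m_succ: "(s - 1) * (r - 1) = m + 1"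
    by (simp add: m_def algebra_simps)
  have "s - 1 \<le> (s - 1) * (r - 1)"
    using mult_left_mono[of 1 "r - 1" "s - 1"] s r by simp
  then have "m > 0"
    using s m_succ by linarith
  have "ln (m / (m + 1)) \<le> m / (m + 1) - 1"
    using \<open>m > 0\<close> by (intro ln_le_minus_one) auto
  moreover have "m / (m + 1) - 1 = - 1 / (m + 1)"
    using \<open>m > 0\<close> by (simp add: field_simps)
  ultimately have ln_m: "ln m \<le> ln (m + 1) - 1 / (m + 1)"
    using \<open>m > 0\<close> by (simp add: ln_div)
  have ln_succ: "ln (m + 1) = ln (s - 1) + ln (r - 1)"
    using s r by (simp add: m_succ[symmetric] ln_mult)
  have "ln (r / (r - 1)) \<le> (r / (r - 1) - (r - 1) / r) / 2"
    using ln_le_half_diff_inverse[of "r / (r - 1)"] r by simp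
  then have ln_r: "ln r - ln (r - 1) \<le> (2 * r - 1) / (2 * r * (r - 1))"
    using r by (simp add: ln_div field_simps)
  have "r \<noteq> 0" "r - 1 \<noteq> 0" "s - 1 \<noteq> 0"
    using s r by auto
  then have rational_part:
    "s / r + 1 / (m + 1) - (s - 1) * ((2 * r - 1) / (2 * r * (r - 1)))
      = (2 * r * s + 1 - s\<^sup>2) / (2 * r * (r - 1) * (s - 1))"
    unfolding m_succ[symmetric]
    by (simp add: divide_simps power2_eq_square) (simp add: algebra_simps)
  have "s\<^sup>2 \<le> 2 * r * s"
    using mult_right_mono[of s "2 * r" s] s r by (simp add: power2_eq_square)
  then have "(2 * r * s + 1 - s\<^sup>2) / (2 * r * (r - 1) * (s - 1)) > 0"
    using s r by (intro divide_pos_pos) auto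
  moreover have "(s - 1) * (ln r - ln (r - 1)) \<le> (s - 1) * ((2 * r - 1) / (2 * r * (r - 1)))"
    using ln_r s by (intro mult_left_mono) auto
  moreover have "(s - 1) * (ln r - ln (r - 1)) = (s - 1) * ln r - s * ln (r - 1) + ln (r - 1)"
    by (simp add: algebra_simps)
  moreover have "m / r = s - 1 - s / r"
    using r by (simp add: m_def field_simps)
  ultimately show ?thesis
    using ln_m ln_succ rational_part unfolding scaled_L_deriv_def m_def[symmetric] by linarith
qed

lemma L_strict_mono_on:
  fixes s :: nat
  assumes "3 \<le> s" "s \<le> 4"
  shows "strict_mono_on {2..} (\<lambda>r. L r s)"
proof (rule strict_mono_onI)
  fix a b :: real assume "a \<in> {2..}" "a < b"
  show "L a s < L b s"
  proof (rule DERIV_pos_imp_increasing[OF \<open>a < b\<close>])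
    fix x assume "a \<le> x" "x \<le> b"
    with \<open>a \<in> {2..}\<close> have "x \<ge> 2" by simp
    have "(x - 1) * (real s - 1) \<ge> 1 * 2"
      using \<open>x \<ge> 2\<close> assms by (intro mult_mono) auto
    then have "x * real s - x - real s > 0"
      by (simp add: algebra_simps)
    moreover have "scaled_L_deriv x (real s) / real s > 0"
      using scaled_L_deriv_pos[of "real s" x] \<open>x \<ge> 2\<close> assms by simp
    ultimately show "\<exists>y. ((\<lambda>r. L r s) has_real_derivative y) (at x) \<and> 0 < y"
      using L_has_real_derivative[of s x] assms by auto
  qed
qed

lemma L_2_3_pos: "L 2 3 > 0"
  by (simp add: L_def)

lemma L_2_4_pos: "L 2 4 > 0"
proof -
  have "ln (2 ^ 4 :: real) < ln (3 ^ 3)"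
    by simp
  then have "4 * ln (2 :: real) < 3 * ln 3"
    by (simp only: ln_realpow)
  then show ?thesis
    by (simp add: L_def)
qed

lemma L_r_2_pos:
  fixes r :: real
  assumes "r > 2"
  shows "L r 2 > 0"
proof -
  have "0 < r * (r - 2)"
    using assms by simp
  then have "ln (r * (r - 2)) < ln ((r - 1)\<^sup>2)"
    by (subst ln_less_cancel_iff) (auto simp: power2_eq_square algebra_simps)
  then have "ln r + ln (r - 2) < 2 * ln (r - 1)"
    using assms by (simp add: ln_mult ln_realpow)
  then have "(r - 2) / 2 * (ln r + ln (r - 2)) < (r - 2) / 2 * (2 * ln (r - 1))"
    using assms by (intro mult_strict_left_mono) auto
  moreover have "(r - 2) / 2 * (2 * ln (r - 1)) = (r - 1) * ln (r - 1) - ln (r - 1)"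
    by (simp add: field_simps)
  moreover have "ln (r - 1) > 0"
    using assms by simp
  moreover have "L r 2 = (r - 1) * ln (r - 1) - (r - 2) / 2 * (ln r + ln (r - 2))"
    by (simp add: L_def field_simps)
  ultimately show ?thesis
    by linarith
qed

theorem lemma6p1:
  shows "(\<forall>s\<in>{2,3,4::nat}. \<forall>r::real. r > 2 \<longrightarrow> L r s > 0)
       \<and> (\<forall>s\<in>{3,4::nat}. L 2 s > 0)"
proof -
  have "L r s > 0" if "s \<in> {3, 4}" "r > 2" for s :: nat and r :: real
  proof -
    have "L 2 s < L r s"
      using L_strict_mono_on[of s] that by (auto intro: strict_mono_onD)
    moreover have "L 2 s > 0"
      using that L_2_3_pos L_2_4_pos by auto
    ultimately show ?thesis by linarith
  qed
  then show ?thesis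
    using L_r_2_pos L_2_3_pos L_2_4_pos by auto
qed

end
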